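(* Let $G=(V,E)$ be a connected graph with $V=\{1,\ldots,n\}$, $\mathbf{w}\colon E\to\{1,\ldots,N\}$, $w,\ell\in\mathbb{N}$ with $\ell$ even and $\ell\le n$, and let $\mathcal{T}$ be an elimination tree of $G$ with root $r$. Write $P_{(r)}(\emptyset)=\sum_{a,b,c,d}\alpha_{a,b,c,d}\,x^ay^bz^c\omega^d$. Then $|\mathcal{M}_{w,\ell}|=\alpha_{\ell/2,\ell/2,n-\ell,w}$.
   Context: Two matchings $M_1,M_2$ are consistent if $M_1\cap M_2=\emptyset$ and $V(M_1)=V(M_2)$ ($V(M)$ = set of endpoints of edges of $M$). $\mathcal{M}_{w,\ell}$ is the set of ordered pairs $(M_1,M_2)$ of consistent matchings in $G$ with $|M_1|=|M_2|=\ell/2$ and $\mathbf{w}(M_1\cup M_2)=w$, where $\mathbf{w}(F)=\sum_{e\in F}\mathbf{w}(e)$. An elimination tree of $G$ is a rooted tree on vertex set $V$ such that for every edge $\{u,v\}\in E$ one of $u,v$ is an ancestor of the other. $\mathtt{tree}[v]$ is the set of nodes of the subtree rooted at $v$ (including $v$). For $W\subseteq V$ let $W^+=\{u,u+n\mid u\in W\}$; $\delta[U]=\{e\in E\mid e\cap U\ne\emptyset\}$. Define $\mathtt{tpl}(W)=\{(E_1,E_2,L)\mid E_1,E_2\subseteq\delta[W],\ L\subseteq W,\ E_1\cap E_2=\emptyset\}$; $\mathtt{mon}(E_1,E_2,L)=x^{|E_1|}y^{|E_2|}z^{|L|}\omega^{\mathbf{w}(E_1\cup E_2)}$; for $I\subseteq[2n]$,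 $\mathtt{dsj}(I)$ is the set of triples $(E_1,E_2,L)$ with $\{s,t\}\cap I=\emptyset$ for all $\{s,t\}\in E_1$, $\{s+n,t+n\}\cap I=\emptyset$ for all $\{s,t\}\in E_2$, and $L^+\cap I=\emptyset$. With Iverson bracket $[\cdot]$, for the root $r$ (whose ancestor set excluding itself is empty), $$P_{(r)}(\emptyset)=\sum_{(E_1,E_2,L)\in\mathtt{tpl}(\mathtt{tree}[r])}\mathtt{mon}(E_1,E_2,L)\sum_{K\subseteq(\mathtt{tree}[r])^+}(-1)^{|K|}[(E_1,E_2,L)\in\mathtt{dsj}(K)]\in\mathbb{Z}[x,y,z,\omega].$$ *)

theory Defs
  imports Main
begin

definition simple_graph :: "nat set \<Rightarrow> nat set set \<Rightarrow> bool" where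
  "simple_graph V E \<longleftrightarrow> (\<forall>e\<in>E. card e = 2 \<and> e \<subseteq> V)"

inductive reach :: "nat set set \<Rightarrow> nat \<Rightarrow> nat \<Rightarrow> bool" for E where
  reach_refl: "reach E u u"
| reach_step: "reach E u v \<Longrightarrow> {v, x} \<in> E \<Longrightarrow> reach E u x"

definition connected_graph :: "nat set \<Rightarrow> nat set set \<Rightarrow> bool" where
  "connected_graph V E \<longleftrightarrow> (\<forall>u\<in>V. \<forall>v\<in>V. reach E u v)"

definition rooted_tree :: "nat set \<Rightarrow> (nat \<Rightarrow> nat) \<Rightarrow> nat \<Rightarrow> bool" where
  "rooted_tree V par r \<longleftrightarrow> r \<in> V \<and> par r = r \<and> (\<forall>v\<in>V. par v \<in> V)
     \<and> (\<forall>v\<in>V. \<exists>k. (par ^^ k) v = r)"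

definition ancestor :: "(nat \<Rightarrow> nat) \<Rightarrow> nat \<Rightarrow> nat \<Rightarrow> bool" where
  "ancestor par u v \<longleftrightarrow> (\<exists>k. (par ^^ k) v = u)"

definition elimination_tree :: "nat set \<Rightarrow> nat set set \<Rightarrow> (nat \<Rightarrow> nat) \<Rightarrow> nat \<Rightarrow> bool" where
  "elimination_tree V E par r \<longleftrightarrow> rooted_tree V par r \<and>
     (\<forall>u v. {u, v} \<in> E \<longrightarrow> ancestor par u v \<or> ancestor par v u)"

definition subtree :: "nat set \<Rightarrow> (nat \<Rightarrow> nat) \<Rightarrow> nat \<Rightarrow> nat set" where
  "subtree V par v = {u \<in> V. ancestor par v u}"

definition matching :: "nat set set \<Rightarrow> nat set set \<Rightarrow> bool" where
  "matching E M \<longleftrightarrow> M \<subseteq> E \<and> (\<forall>e\<in>M. \<forall>f\<in>M. e \<noteq> f \<longrightarrow> e \<inter> f = {})"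

definition consistent :: "nat set set \<Rightarrow> nat set set \<Rightarrow> bool" where
  "consistent M1 M2 \<longleftrightarrow> M1 \<inter> M2 = {} \<and> \<Union> M1 = \<Union> M2"

definition wsum :: "(nat set \<Rightarrow> nat) \<Rightarrow> nat set set \<Rightarrow> nat" where
  "wsum wt F = (\<Sum>e\<in>F. wt e)"

definition Mwl :: "nat set set \<Rightarrow> (nat set \<Rightarrow> nat) \<Rightarrow> nat \<Rightarrow> nat \<Rightarrow> (nat set set \<times> nat set set) set" where
  "Mwl E wt w l = {(M1, M2). matching E M1 \<and> matching E M2 \<and> consistent M1 M2
      \<and> card M1 = l div 2 \<and> card M2 = l div 2 \<and> wsum wt (M1 \<union> M2) = w}"

definition plus_set :: "nat \<Rightarrow> nat set \<Rightarrow> nat set" where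
  "plus_set n W = W \<union> (\<lambda>u. u + n) ` W"

definition delta :: "nat set set \<Rightarrow> nat set \<Rightarrow> nat set set" where
  "delta E U = {e \<in> E. e \<inter> U \<noteq> {}}"

definition tpl :: "nat set set \<Rightarrow> nat set \<Rightarrow> (nat set set \<times> nat set set \<times> nat set) set" where
  "tpl E W = {(E1, E2, L). E1 \<subseteq> delta E W \<and> E2 \<subseteq> delta E W \<and> L \<subseteq> W \<and> E1 \<inter> E2 = {}}"

definition dsj :: "nat \<Rightarrow> nat set \<Rightarrow> (nat set set \<times> nat set set \<times> nat set) set" where
  "dsj n I = {(E1, E2, L). (\<forall>e\<in>E1. e \<inter> I = {}) \<and> (\<forall>e\<in>E2. (\<lambda>s. s + n) ` e \<inter> I = {})
       \<and> plus_set n L \<inter> I = {}}"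

(* P_(r)(emptyset), represented by its coefficient function: the coefficient of
   x^a y^b z^c omega^d. *)
definition P_root_coeff :: "nat \<Rightarrow> nat set \<Rightarrow> nat set set \<Rightarrow> (nat set \<Rightarrow> nat) \<Rightarrow> (nat \<Rightarrow> nat) \<Rightarrow> nat
     \<Rightarrow> nat \<Rightarrow> nat \<Rightarrow> nat \<Rightarrow> nat \<Rightarrow> int" where
  "P_root_coeff n V E wt par r a b c d =
     (\<Sum>(E1, E2, L) \<in> {(E1, E2, L) \<in> tpl E (subtree V par r).
          card E1 = a \<and> card E2 = b \<and> card L = c \<and> wsum wt (E1 \<union> E2) = d}.
        (\<Sum>K \<in> Pow (plus_set n (subtree V par r)).
            (-1) ^ card K * (if (E1, E2, L) \<in> dsj n K then 1 else 0)))"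

end

theory Submission
  imports Defs
begin

text \<open>
  For a fixed triple (E1, E2, L) the inner sum over K is an inclusion-exclusion sum: it equals 1
  if the elements of the doubled vertex set touched by the triple (E1 in the first copy, E2 in
  the second, L in both) exhaust both copies, and 0 otherwise. Hence the coefficient counts the
  triples for which both E1 and E2 together with L cover V. When |E1| = |E2| = l/2 and
  |L| = n - l, counting vertices leaves no room for overlaps: the edges of each Ei are pairwise
  disjoint and avoid L, so E1 and E2 are perfect matchings of V - L, i.e. a consistent pair of
  matchings, and L = V - \<Union>E1 is determined by them.
\<close>

lemma sum_Pow_alternating_disjoint:
  assumes "finite A"
  shows "(\<Sum>K\<in>Pow A. (-1::'b::comm_ring_1) ^ card K * (if K \<inter> U = {} then 1 else 0))
       = (if A \<subseteq> U then 1 else 0)"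
proof -
  have prod_if: "(\<Prod>x\<in>K. if P x then 1 else 0 :: 'b) = (if \<forall>x\<in>K. P x then 1 else 0)"
    if "finite K" for K and P :: "'a \<Rightarrow> bool"
    using that by (cases "\<forall>x\<in>K. P x") (auto intro!: prod.neutral prod_zero)
  have "(\<Sum>K\<in>Pow A. (-1::'b) ^ card K * (if K \<inter> U = {} then 1 else 0))
      = (\<Sum>K\<in>Pow A. (-1) ^ card K * (\<Prod>x\<in>K. if x \<notin> U then 1 else 0) * (\<Prod>x\<in>A - K. 1))"
    using assms by (intro sum.cong refl) (auto simp: prod_if rev_finite_subset disjoint_iff)
  also have "\<dots> = (\<Prod>x\<in>A. 1 - (if x \<notin> U then 1 else 0))"
    by (rule prod_diff_conv_sum[OF assms, symmetric])
  also have "\<dots> = (\<Prod>x\<in>A. if x \<in> U then 1 else 0)"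
    by (intro prod.cong) auto
  also have "\<dots> = (if A \<subseteq> U then 1 else 0)"
    by (simp add: prod_if assms subset_iff)
  finally show ?thesis .
qed

lemma card_Union_eq_sum_card_iff:
  assumes "finite F" and "\<And>A. A \<in> F \<Longrightarrow> finite A"
  shows "card (\<Union>F) = sum card F \<longleftrightarrow> pairwise disjnt F"
proof
  assume card_eq: "card (\<Union>F) = sum card F"
  show "pairwise disjnt F"
  proof (rule pairwiseI, rule ccontr)
    fix e f assume "e \<in> F" "f \<in> F" "e \<noteq> f" "\<not> disjnt e f"
    have "\<Union>F = \<Union>(F - {e}) \<union> (e - f)"
      using \<open>e \<in> F\<close> \<open>f \<in> F\<close> \<open>e \<noteq> f\<close> by blast
    then have "card (\<Union>F) \<le> sum card (F - {e}) + card (e - f)"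
      by (metis card_Un_le card_Union_le_sum_card add_right_mono order_trans)
    also have "card (e - f) < card e"
      using \<open>\<not> disjnt e f\<close> \<open>e \<in> F\<close> assms(2) by (intro psubset_card_mono) (auto simp: disjnt_def)
    also have "sum card (F - {e}) + card e = sum card F"
      using \<open>e \<in> F\<close> assms(1) by (simp add: sum.remove)
    finally show False
      using card_eq by simp
  qed
qed (use assms card_Union_disjoint in blast)

lemma matching_iff_pairwise_disjnt: "matching E M \<longleftrightarrow> M \<subseteq> E \<and> pairwise disjnt M"
  unfolding matching_def pairwise_def disjnt_def by blast

lemma card_Union_pairwise_disjnt_pairs:
  assumes "pairwise disjnt M" and "\<forall>e\<in>M. card e = 2"
  shows "card (\<Union>M) = 2 * card M"
proof -
  have "card (\<Union>M) = sum card M"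
    using assms by (intro card_Union_disjoint) (auto intro: card_ge_0_finite)
  also have "\<dots> = 2 * card M"
    using assms(2) by simp
  finally show ?thesis .
qed

lemma matching_and_Union_if_cover:
  assumes edges: "\<forall>e\<in>E. card e = 2" and "F \<subseteq> E" and "finite V"
    and "\<Union>F \<subseteq> V" and "L \<subseteq> V" and cover: "V \<subseteq> \<Union>F \<union> L"
    and card_V: "card L + 2 * card F = card V"
  shows "matching E F \<and> \<Union>F = V - L"
proof -
  have "F \<subseteq> Pow V"
    using \<open>\<Union>F \<subseteq> V\<close> by blast
  then have "finite F"
    using \<open>finite V\<close> by (simp add: finite_subset)
  have fin_members: "\<And>A. A \<in> F \<Longrightarrow> finite A"
    using \<open>\<Union>F \<subseteq> V\<close> \<open>finite V\<close> by (auto intro: rev_finite_subset)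
  have fin_U: "finite (\<Union>F)" and fin_L: "finite L"
    using \<open>finite V\<close> \<open>\<Union>F \<subseteq> V\<close> \<open>L \<subseteq> V\<close> by (auto intro: rev_finite_subset)
  have sum_F: "sum card F = 2 * card F"
    using edges \<open>F \<subseteq> E\<close> by (simp add: subset_iff)
  have "card V \<le> card (\<Union>F \<union> L)"
    using cover fin_U fin_L by (intro card_mono) auto
  also have "\<dots> + card (\<Union>F \<inter> L) = card (\<Union>F) + card L"
    by (rule card_Un_Int[OF fin_U fin_L, symmetric])
  finally have "card V + card (\<Union>F \<inter> L) \<le> card (\<Union>F) + card L"
    by simp
  moreover have "card (\<Union>F) \<le> sum card F"
    by (rule card_Union_le_sum_card)
  ultimately have "card (\<Union>F) = sum card F" and "card (\<Union>F \<inter> L) = 0"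
    using card_V sum_F by linarith+
  then have "pairwise disjnt F" and "\<Union>F \<inter> L = {}"
    using card_Union_eq_sum_card_iff[OF \<open>finite F\<close> fin_members] fin_U by auto
  then show ?thesis
    using \<open>F \<subseteq> E\<close> \<open>\<Union>F \<subseteq> V\<close> cover by (auto simp: matching_iff_pairwise_disjnt)
qed

text \<open>
  The elements of the doubled vertex set that dsj n K forbids K to contain: E1 lives in the
  first copy, E2 in the second (vertex v is v + n there), and L in both.
\<close>
definition footprint :: "nat \<Rightarrow> nat set set \<times> nat set set \<times> nat set \<Rightarrow> nat set" where
  "footprint n = (\<lambda>(E1, E2, L). \<Union>E1 \<union> (\<lambda>s. s + n) ` \<Union>E2 \<union> plus_set n L)"

definition covers_both_copies :: "nat set \<Rightarrow> nat set set \<times> nat set set \<times> nat set \<Rightarrow> bool" where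
  "covers_both_copies V = (\<lambda>(E1, E2, L). V \<subseteq> \<Union>E1 \<union> L \<and> V \<subseteq> \<Union>E2 \<union> L)"

lemma dsj_iff_disjoint_footprint: "t \<in> dsj n K \<longleftrightarrow> K \<inter> footprint n t = {}"
  by (cases t) (auto simp: dsj_def footprint_def)

lemma plus_set_subset_footprint_iff:
  assumes "W \<subseteq> {1..n}" and "\<Union>E1 \<subseteq> W" "\<Union>E2 \<subseteq> W" "L \<subseteq> W"
  shows "plus_set n W \<subseteq> footprint n (E1, E2, L) \<longleftrightarrow> covers_both_copies W (E1, E2, L)"
proof -
  have bounds: "1 \<le> y \<and> y \<le> n" if "y \<in> W" for y
    using that assms(1) by auto
  have shift_not_in: "x + n \<notin> W" if "x \<in> W" for x
    using bounds[of x] bounds[of "x + n"] that by auto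
  have not_in_shift: "x \<notin> (\<lambda>s. s + n) ` W" if "x \<in> W" for x
    using bounds[of x] that by (auto dest: bounds)
  have "x \<in> footprint n (E1, E2, L) \<longleftrightarrow> x \<in> \<Union>E1 \<union> L" if "x \<in> W" for x
    using not_in_shift[OF that] assms(3,4)
    unfolding footprint_def plus_set_def by blast
  moreover have "x + n \<in> footprint n (E1, E2, L) \<longleftrightarrow> x \<in> \<Union>E2 \<union> L" if "x \<in> W" for x
    using shift_not_in[OF that] assms(2,4)
    unfolding footprint_def plus_set_def by auto
  ultimately show ?thesis
    unfolding plus_set_def covers_both_copies_def image_subset_iff Un_subset_iff by blast
qed

lemma alternating_sum_dsj:
  assumes "W \<subseteq> {1..n}" and "\<Union>E1 \<subseteq> W" "\<Union>E2 \<subseteq> W" "L \<subseteq> W"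
  shows "(\<Sum>K\<in>Pow (plus_set n W). (-1) ^ card K * (if (E1, E2, L) \<in> dsj n K then 1 else 0))
       = (if covers_both_copies W (E1, E2, L) then 1 else (0::int))"
proof -
  have "finite (plus_set n W)"
    using assms(1) by (simp add: plus_set_def finite_subset)
  then show ?thesis
    by (simp add: dsj_iff_disjoint_footprint sum_Pow_alternating_disjoint
        plus_set_subset_footprint_iff[OF assms])
qed

lemma subtree_root: "rooted_tree V par r \<Longrightarrow> subtree V par r = V"
  unfolding rooted_tree_def subtree_def ancestor_def by auto

lemma delta_simple_graph:
  assumes "simple_graph V E"
  shows "delta E V = E"
proof -
  have "e \<inter> V = e" and "e \<noteq> {}" if "e \<in> E" for e
    using assms that unfolding simple_graph_def by (auto simp flip: card_0_eq)
  then show ?thesis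
    unfolding delta_def by auto
qed

lemma finite_simple_graph_edges:
  assumes "simple_graph V E" and "finite V"
  shows "finite E"
proof -
  have "E \<subseteq> Pow V"
    using assms(1) unfolding simple_graph_def by blast
  then show ?thesis
    using assms(2) by (simp add: finite_subset)
qed

definition monomial_triples :: "nat set set \<Rightarrow> (nat set \<Rightarrow> nat) \<Rightarrow> nat set \<Rightarrow> nat \<Rightarrow> nat \<Rightarrow> nat \<Rightarrow> nat
    \<Rightarrow> (nat set set \<times> nat set set \<times> nat set) set" where
  "monomial_triples E wt W a b c d = {(E1, E2, L) \<in> tpl E W.
      card E1 = a \<and> card E2 = b \<and> card L = c \<and> wsum wt (E1 \<union> E2) = d}"

lemma P_root_coeff_eq_card_covering:
  assumes "simple_graph V E" and "V \<subseteq> {1..n}" and "subtree V par r = V"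
  shows "P_root_coeff n V E wt par r a b c d
       = int (card {t \<in> monomial_triples E wt V a b c d. covers_both_copies V t})"
proof -
  let ?T = "monomial_triples E wt V a b c d"
  have "finite V"
    using assms(2) by (rule finite_subset) simp
  then have "?T \<subseteq> Pow E \<times> Pow E \<times> Pow V" and "finite (Pow E \<times> Pow E \<times> Pow V)"
    using assms(1) finite_simple_graph_edges
    by (auto simp: monomial_triples_def tpl_def delta_simple_graph)
  then have "finite ?T"
    by (rule finite_subset)
  have "P_root_coeff n V E wt par r a b c d = (\<Sum>t\<in>?T. if covers_both_copies V t then 1 else 0)"
    unfolding P_root_coeff_def assms(3) monomial_triples_def
  proof (intro sum.cong refl, clarify)
    fix E1 E2 L assume "(E1, E2, L) \<in> tpl E V"
    then have "\<Union>E1 \<subseteq> V" "\<Union>E2 \<subseteq> V" "L \<subseteq> V"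
      using assms(1) by (auto simp: tpl_def delta_simple_graph simple_graph_def)
    then show "(\<Sum>K\<in>Pow (plus_set n V). (-1) ^ card K * (if (E1, E2, L) \<in> dsj n K then 1 else 0))
        = (if covers_both_copies V (E1, E2, L) then 1 else (0::int))"
      by (rule alternating_sum_dsj[OF assms(2)])
  qed
  also have "\<dots> = int (card {t \<in> ?T. covers_both_copies V t})"
    using \<open>finite ?T\<close> by (simp add: sum.If_cases Int_def)
  finally show ?thesis .
qed

lemma covering_triples_eq_image_Mwl:
  assumes graph: "simple_graph V E" and "finite V" and "2 * k \<le> card V"
  shows "{t \<in> monomial_triples E wt V k k (card V - 2 * k) w. covers_both_copies V t}
       = (\<lambda>(M1, M2). (M1, M2, V - \<Union>M1)) ` Mwl E wt w (2 * k)"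
proof -
  have edges: "\<forall>e\<in>E. card e = 2" and edges_in_V: "\<And>F. F \<subseteq> E \<Longrightarrow> \<Union>F \<subseteq> V"
    using graph unfolding simple_graph_def by auto
  show ?thesis
  proof (intro equalityI subsetI)
    fix t
    assume "t \<in> {t \<in> monomial_triples E wt V k k (card V - 2 * k) w. covers_both_copies V t}"
    then obtain E1 E2 L where t: "t = (E1, E2, L)"
      and sub: "E1 \<subseteq> E" "E2 \<subseteq> E" "L \<subseteq> V" and "E1 \<inter> E2 = {}"
      and card: "card E1 = k" "card E2 = k" "card L = card V - 2 * k"
      and "wsum wt (E1 \<union> E2) = w" and cover: "V \<subseteq> \<Union>E1 \<union> L" "V \<subseteq> \<Union>E2 \<union> L"
      by (auto simp: monomial_triples_def tpl_def delta_simple_graph[OF graph] covers_both_copies_def)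
    have "card L + 2 * k = card V"
      using card(3) assms(3) by simp
    then have "matching E E1 \<and> \<Union>E1 = V - L" and "matching E E2 \<and> \<Union>E2 = V - L"
      using matching_and_Union_if_cover[OF edges sub(1) \<open>finite V\<close> edges_in_V[OF sub(1)] \<open>L \<subseteq> V\<close>]
        matching_and_Union_if_cover[OF edges sub(2) \<open>finite V\<close> edges_in_V[OF sub(2)] \<open>L \<subseteq> V\<close>]
        cover card by simp_all
    then have "(E1, E2) \<in> Mwl E wt w (2 * k)" and "L = V - \<Union>E1"
      using card \<open>E1 \<inter> E2 = {}\<close> \<open>wsum wt (E1 \<union> E2) = w\<close> \<open>L \<subseteq> V\<close>
      by (auto simp: Mwl_def consistent_def)
    then show "t \<in> (\<lambda>(M1, M2). (M1, M2, V - \<Union>M1)) ` Mwl E wt w (2 * k)"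
      using t by force
  next
    fix t
    assume "t \<in> (\<lambda>(M1, M2). (M1, M2, V - \<Union>M1)) ` Mwl E wt w (2 * k)"
    then obtain M1 M2 where t: "t = (M1, M2, V - \<Union>M1)"
      and "matching E M1" "matching E M2" and consistent: "M1 \<inter> M2 = {}" "\<Union>M1 = \<Union>M2"
      and card: "card M1 = k" "card M2 = k" and "wsum wt (M1 \<union> M2) = w"
      by (auto simp: Mwl_def consistent_def)
    then have sub: "M1 \<subseteq> E" "M2 \<subseteq> E" and "pairwise disjnt M1"
      by (auto simp: matching_iff_pairwise_disjnt)
    then have "card (\<Union>M1) = 2 * k"
      using card_Union_pairwise_disjnt_pairs edges card by (metis subsetD)
    then have "card (V - \<Union>M1) = card V - 2 * k"
      using edges_in_V[OF sub(1)] \<open>finite V\<close> by (simp add: card_Diff_subset finite_subset)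
    then show "t \<in> {t \<in> monomial_triples E wt V k k (card V - 2 * k) w. covers_both_copies V t}"
      using t sub consistent card \<open>wsum wt (M1 \<union> M2) = w\<close>
      by (auto simp: monomial_triples_def tpl_def delta_simple_graph[OF graph] covers_both_copies_def)
  qed
qed

theorem lemma7:
  fixes n N :: nat and E :: "nat set set" and wt :: "nat set \<Rightarrow> nat"
    and w l :: nat and par :: "nat \<Rightarrow> nat" and r :: nat
  assumes "simple_graph {1..n} E"
    and "connected_graph {1..n} E"
    and "\<forall>e\<in>E. wt e \<in> {1..N}"
    and "even l" and "l \<le> n"
    and "elimination_tree {1..n} E par r"
  shows "int (card (Mwl E wt w l)) = P_root_coeff n {1..n} E wt par r (l div 2) (l div 2) (n - l) w"
proof -
  obtain k where l: "l = 2 * k"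
    using \<open>even l\<close> by (auto elim: evenE)
  have "subtree {1..n} par r = {1..n}"
    using assms(6) by (simp add: elimination_tree_def subtree_root)
  then have "P_root_coeff n {1..n} E wt par r (l div 2) (l div 2) (n - l) w
      = int (card {t \<in> monomial_triples E wt {1..n} k k (card {1..n} - 2 * k) w.
                    covers_both_copies {1..n} t})"
    using P_root_coeff_eq_card_covering[OF assms(1) order_refl] l by simp
  also have "{t \<in> monomial_triples E wt {1..n} k k (card {1..n} - 2 * k) w.
                covers_both_copies {1..n} t}
      = (\<lambda>(M1, M2). (M1, M2, {1..n} - \<Union>M1)) ` Mwl E wt w l"
    using covering_triples_eq_image_Mwl[OF assms(1)] l \<open>l \<le> n\<close> by simp
  also have "card \<dots> = card (Mwl E wt w l)"
    by (rule card_image) (auto simp: inj_on_def)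
  finally show ?thesis
    by simp
qed

end
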